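(* Consider the model in which one observes $(Y_t)_{t\in[0,1]}$ with $dY_t=2\sqrt{f(t)}\,dt+n^{-1/2}dW_t$, $W$ a standard Brownian motion, and let $\mathbb P_f$ be the law of the data. Let $\mathcal G=\{f:[0,1]\to\mathbb R:\ f\ge0,\ f(x)=ax+b\text{ with }|a|+|b|\le2\}$. Then there exists $C>0$ such that $$\liminf_{n\to\infty}\ \inf_{\widehat f_n}\ \sup_{f\in\mathcal G:\ f(0)\le n^{-1/2}}\ \mathbb P_f\Big(\frac{|\widehat f_n(0)-f(0)|}{(n\log n)^{-1/2}}\ge C\Big)>0,$$ where the infimum is over all measurable estimators of $f(0)$ based on the data. *)

theory Defs
  imports "HOL-Probability.Probability"
begin

definition data_space :: "(real \<Rightarrow> real) measure" where
  "data_space = PiM {0..1} (\<lambda>_. (borel :: real measure))"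

definition drift :: "(real \<Rightarrow> real) \<Rightarrow> real \<Rightarrow> real" where
  "drift f t = integral {0..t} (\<lambda>s. 2 * sqrt (f s))"

text \<open>P is the law of (Y_t), where dY_t = 2 sqrt(f(t)) dt + n^(-1/2) dW_t, Y_0 = 0,
  W a standard Brownian motion: Y_0 = 0 almost surely and, for every grid
  0 = t_0 < t_1 < ... < t_k <= 1, the increments are independent Gaussians with
  mean drift f t_(i+1) - drift f t_i and variance (t_(i+1) - t_i)/n.\<close>
definition is_data_law :: "nat \<Rightarrow> (real \<Rightarrow> real) \<Rightarrow> (real \<Rightarrow> real) measure \<Rightarrow> bool" where
  "is_data_law n f P \<longleftrightarrow>
     prob_space P \<and> sets P = sets data_space \<and>
     (AE \<omega> in P. \<omega> 0 = 0) \<and>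
     (\<forall>k::nat. \<forall>t::nat \<Rightarrow> real.
        (t 0 = 0 \<and> (\<forall>i<k. t i < t (Suc i)) \<and> t k \<le> 1) \<longrightarrow>
          prob_space.indep_vars P (\<lambda>_. borel) (\<lambda>i \<omega>. \<omega> (t (Suc i)) - \<omega> (t i)) {..<k} \<and>
          (\<forall>i<k. distributed P lborel (\<lambda>\<omega>. \<omega> (t (Suc i)) - \<omega> (t i))
             (\<lambda>x. ennreal (normal_density (drift f (t (Suc i)) - drift f (t i))
                                          (sqrt ((t (Suc i) - t i) / real n)) x))))"

definition affine_class :: "(real \<Rightarrow> real) set" where
  "affine_class = {f. \<exists>a b. \<bar>a\<bar> + \<bar>b\<bar> \<le> 2 \<and> f = (\<lambda>x. a * x + b) \<and> (\<forall>x\<in>{0..1}. f x \<ge> 0)}"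

end

theory Submission
  imports Defs
begin

text \<open>
  Le Cam's two-point method with \<open>f\<^sub>0 x = x\<close> and \<open>f\<^sub>1 x = x + \<delta>\<close>, \<open>\<delta> = (n log n)\<^sup>-\<^sup>1\<^sup>/\<^sup>2\<close>:
  both lie in the class with \<open>f 0 \<le> n\<^sup>-\<^sup>1\<^sup>/\<^sup>2\<close> and their values at \<open>0\<close> differ by \<open>\<delta>\<close>, so
  an estimator within \<open>\<delta>/2\<close> of both would yield a good test of one law against the other.
  On events depending on finitely many coordinates the two laws are products of Gaussian
  laws of the path increments, whose Hellinger affinity is \<open>exp (- \<Sum> (\<Delta>m)\<^sup>2 / (8\<sigma>\<^sup>2))\<close>.
  Since the drift densities differ by \<open>2 (\<surd>(x + \<delta>) - \<surd>x) \<le> 2\<delta> / \<surd>(x + \<delta>)\<close>, this sum is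
  at most \<open>\<delta>\<^sup>2 n log ((1 + \<delta>) / \<delta>) / 2 \<le> 1\<close> for every grid, so the affinity is at least
  \<open>e\<^sup>-\<^sup>1\<close> and the two error probabilities of any such test add up to at least \<open>e\<^sup>-\<^sup>2 / 2\<close>.
  Approximating arbitrary events of the path \<open>\<sigma>\<close>-algebra by such cylinder events, simultaneously
  under both laws, extends the bound to all tests.
\<close>

section \<open>Hellinger affinity of Gaussian products and tests\<close>

lemma nn_integral_normal_density:
  assumes "\<sigma> > 0"
  shows "(\<integral>\<^sup>+ x. ennreal (normal_density \<mu> \<sigma> x) \<partial>lborel) = 1"
proof -
  interpret prob_space "density lborel (normal_density \<mu> \<sigma>)"
    using assms by (rule prob_space_normal_density)
  show ?thesis
    using emeasure_space_1 by (simp add: emeasure_density)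
qed

lemma sqrt_normal_density_mult:
  assumes "\<sigma> > 0"
  shows "sqrt (normal_density \<mu>\<^sub>0 \<sigma> x * normal_density \<mu>\<^sub>1 \<sigma> x) =
    exp (- ((\<mu>\<^sub>0 - \<mu>\<^sub>1)\<^sup>2 / (8 * \<sigma>\<^sup>2))) * normal_density ((\<mu>\<^sub>0 + \<mu>\<^sub>1) / 2) \<sigma> x"
proof -
  define c where "c = 1 / sqrt (2 * pi * \<sigma>\<^sup>2)"
  define e where "e = - ((\<mu>\<^sub>0 - \<mu>\<^sub>1)\<^sup>2 / (8 * \<sigma>\<^sup>2)) - (x - (\<mu>\<^sub>0 + \<mu>\<^sub>1) / 2)\<^sup>2 / (2 * \<sigma>\<^sup>2)"
  have "- (x - \<mu>\<^sub>0)\<^sup>2 / (2 * \<sigma>\<^sup>2) + - (x - \<mu>\<^sub>1)\<^sup>2 / (2 * \<sigma>\<^sup>2) = e + e"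
    unfolding e_def using assms by (simp add: field_simps power2_eq_square)
  then have "normal_density \<mu>\<^sub>0 \<sigma> x * normal_density \<mu>\<^sub>1 \<sigma> x = (c * exp e)\<^sup>2"
    unfolding normal_density_def c_def
    by (simp add: power_mult_distrib mult_exp_exp power2_eq_square)
  then have "sqrt (normal_density \<mu>\<^sub>0 \<sigma> x * normal_density \<mu>\<^sub>1 \<sigma> x) = c * exp e"
    by (simp add: c_def)
  then show ?thesis
    unfolding normal_density_def c_def e_def by (simp add: mult_exp_exp)
qed

lemma nn_integral_sqrt_normal_density_mult:
  assumes "\<sigma> > 0"
  shows "(\<integral>\<^sup>+ x. ennreal (sqrt (normal_density \<mu>\<^sub>0 \<sigma> x * normal_density \<mu>\<^sub>1 \<sigma> x)) \<partial>lborel)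
     = ennreal (exp (- ((\<mu>\<^sub>0 - \<mu>\<^sub>1)\<^sup>2 / (8 * \<sigma>\<^sup>2))))"
  using assms
  by (simp add: sqrt_normal_density_mult ennreal_mult nn_integral_cmult nn_integral_normal_density)

lemma real_sqrt_prod: "sqrt (prod f A) = (\<Prod>i\<in>A. sqrt (f i))"
  by (induction A rule: infinite_finite_induct) (auto simp: real_sqrt_mult)

lemma nn_integral_sqrt_prod_normal_density:
  assumes I: "finite I" and \<sigma>: "\<And>i. i \<in> I \<Longrightarrow> \<sigma> i > 0"
  shows "(\<integral>\<^sup>+ x. ennreal (sqrt ((\<Prod>i\<in>I. normal_density (\<mu>\<^sub>0 i) (\<sigma> i) (x i)) *
                                  (\<Prod>i\<in>I. normal_density (\<mu>\<^sub>1 i) (\<sigma> i) (x i)))) \<partial>PiM I (\<lambda>_. lborel))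
       = ennreal (exp (- (\<Sum>i\<in>I. (\<mu>\<^sub>0 i - \<mu>\<^sub>1 i)\<^sup>2 / (8 * (\<sigma> i)\<^sup>2))))"
proof -
  interpret product_sigma_finite "\<lambda>_::'i. lborel :: real measure"
    by (simp add: product_sigma_finite_def lborel.sigma_finite_measure_axioms)
  have "(\<integral>\<^sup>+ x. ennreal (sqrt ((\<Prod>i\<in>I. normal_density (\<mu>\<^sub>0 i) (\<sigma> i) (x i)) *
                                  (\<Prod>i\<in>I. normal_density (\<mu>\<^sub>1 i) (\<sigma> i) (x i)))) \<partial>PiM I (\<lambda>_. lborel))
      = (\<integral>\<^sup>+ x. (\<Prod>i\<in>I. ennreal (sqrt (normal_density (\<mu>\<^sub>0 i) (\<sigma> i) (x i) *
                                                normal_density (\<mu>\<^sub>1 i) (\<sigma> i) (x i)))) \<partial>PiM I (\<lambda>_. lborel))"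
    by (simp add: prod.distrib[symmetric] real_sqrt_prod prod_ennreal)
  also have "\<dots> = (\<Prod>i\<in>I. \<integral>\<^sup>+ y. ennreal (sqrt (normal_density (\<mu>\<^sub>0 i) (\<sigma> i) y *
                                                normal_density (\<mu>\<^sub>1 i) (\<sigma> i) y)) \<partial>lborel)"
    using I by (intro product_nn_integral_prod) auto
  also have "\<dots> = (\<Prod>i\<in>I. ennreal (exp (- ((\<mu>\<^sub>0 i - \<mu>\<^sub>1 i)\<^sup>2 / (8 * (\<sigma> i)\<^sup>2)))))"
    using \<sigma> by (intro prod.cong refl nn_integral_sqrt_normal_density_mult) auto
  also have "\<dots> = ennreal (exp (- (\<Sum>i\<in>I. (\<mu>\<^sub>0 i - \<mu>\<^sub>1 i)\<^sup>2 / (8 * (\<sigma> i)\<^sup>2))))"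
    using I by (simp add: exp_sum prod_ennreal flip: sum_negf)
  finally show ?thesis .
qed

lemma PiM_density_lborel:
  fixes g :: "'i \<Rightarrow> real \<Rightarrow> real"
  assumes I: "finite I" and g_meas: "\<And>i. i \<in> I \<Longrightarrow> g i \<in> borel_measurable borel"
    and g_nonneg: "\<And>i x. i \<in> I \<Longrightarrow> g i x \<ge> 0"
    and g_prob: "\<And>i. i \<in> I \<Longrightarrow> prob_space (density lborel (g i))"
  shows "PiM I (\<lambda>i. density lborel (g i)) =
           density (PiM I (\<lambda>_. lborel)) (\<lambda>x. ennreal (\<Prod>i\<in>I. g i (x i)))"
proof -
  define M where "M i = (if i \<in> I then density lborel (g i) else lborel)" for i
  interpret M: product_sigma_finite M
    unfolding product_sigma_finite_def M_def
    using g_prob prob_space_imp_sigma_finite lborel.sigma_finite_measure_axioms by auto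
  interpret L: product_sigma_finite "\<lambda>_::'i. lborel :: real measure"
    by (simp add: product_sigma_finite_def lborel.sigma_finite_measure_axioms)
  have "density (PiM I (\<lambda>_. lborel)) (\<lambda>x. ennreal (\<Prod>i\<in>I. g i (x i))) = PiM I M"
  proof (rule M.PiM_eqI[OF I])
    show "sets (density (PiM I (\<lambda>_. lborel)) (\<lambda>x. ennreal (\<Prod>i\<in>I. g i (x i)))) = sets (PiM I M)"
      by (simp add: M_def cong: sets_PiM_cong)
    fix A assume "\<And>i. i \<in> I \<Longrightarrow> A i \<in> sets (M i)"
    then have A: "\<And>i. i \<in> I \<Longrightarrow> A i \<in> sets borel" by (simp add: M_def)
    have "emeasure (density (PiM I (\<lambda>_. lborel)) (\<lambda>x. ennreal (\<Prod>i\<in>I. g i (x i)))) (Pi\<^sub>E I A)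
       = (\<integral>\<^sup>+ x. ennreal (\<Prod>i\<in>I. g i (x i)) * indicator (Pi\<^sub>E I A) x \<partial>PiM I (\<lambda>_. lborel))"
      using A g_meas by (intro emeasure_density) (auto intro!: sets_PiM_I_finite I)
    also have "\<dots> = (\<integral>\<^sup>+ x. (\<Prod>i\<in>I. ennreal (g i (x i)) * indicator (A i) (x i)) \<partial>PiM I (\<lambda>_. lborel))"
    proof (rule nn_integral_cong)
      fix x assume "x \<in> space (PiM I (\<lambda>_. lborel :: real measure))"
      then have "indicator (Pi\<^sub>E I A) x = (\<Prod>i\<in>I. indicator (A i) (x i) :: ennreal)"
        using I by (auto simp: space_PiM indicator_def PiE_def Pi_def prod_zero_iff)
      then show "ennreal (\<Prod>i\<in>I. g i (x i)) * indicator (Pi\<^sub>E I A) x =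
                   (\<Prod>i\<in>I. ennreal (g i (x i)) * indicator (A i) (x i))"
        using g_nonneg by (simp add: prod.distrib prod_ennreal)
    qed
    also have "\<dots> = (\<Prod>i\<in>I. \<integral>\<^sup>+ y. ennreal (g i y) * indicator (A i) y \<partial>lborel)"
      using g_meas A by (intro L.product_nn_integral_prod[OF I]) auto
    also have "\<dots> = (\<Prod>i\<in>I. emeasure (M i) (A i))"
      using g_meas A by (intro prod.cong refl) (simp add: M_def emeasure_density)
    finally show "emeasure (density (PiM I (\<lambda>_. lborel)) (\<lambda>x. ennreal (\<Prod>i\<in>I. g i (x i)))) (Pi\<^sub>E I A)
                    = (\<Prod>i\<in>I. emeasure (M i) (A i))" .
  qed
  moreover have "PiM I (\<lambda>i. density lborel (g i)) = PiM I M"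
    by (rule PiM_cong) (auto simp: M_def)
  ultimately show ?thesis by simp
qed

lemma sqrt_mult_le_weighted:
  fixes a b r :: real
  assumes "a \<ge> 0" "b \<ge> 0" "r > 0"
  shows "sqrt (a * b) \<le> (r * a + b / r) / 2"
proof -
  have "0 \<le> (sqrt (r * a) - sqrt (b / r))\<^sup>2" by simp
  also have "\<dots> = r * a + b / r - 2 * sqrt (a * b)"
    using assms by (simp add: power2_diff real_sqrt_mult[symmetric])
  finally show ?thesis by simp
qed

lemma density_test_error_ge:
  fixes p\<^sub>0 p\<^sub>1 :: "'a \<Rightarrow> real"
  assumes meas: "p\<^sub>0 \<in> borel_measurable N" "p\<^sub>1 \<in> borel_measurable N"
    and nonneg: "\<And>x. p\<^sub>0 x \<ge> 0" "\<And>x. p\<^sub>1 x \<ge> 0"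
    and prob: "prob_space (density N p\<^sub>0)" "prob_space (density N p\<^sub>1)"
    and S: "S \<in> sets N" and \<rho>: "\<rho> > 0"
    and affinity: "ennreal \<rho> \<le> (\<integral>\<^sup>+ x. ennreal (sqrt (p\<^sub>0 x * p\<^sub>1 x)) \<partial>N)"
  shows "\<rho>\<^sup>2 / 2 \<le> measure (density N p\<^sub>0) S + measure (density N p\<^sub>1) (space N - S)"
proof -
  let ?Q\<^sub>0 = "density N p\<^sub>0" and ?Q\<^sub>1 = "density N p\<^sub>1" and ?S' = "space N - S"
  interpret Q\<^sub>0: prob_space ?Q\<^sub>0 by (rule prob(1))
  interpret Q\<^sub>1: prob_space ?Q\<^sub>1 by (rule prob(2))
  have S': "?S' \<in> sets N" using S by auto
  define r where "r = 2 / \<rho>"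
  have r: "r > 0" using \<rho> by (simp add: r_def)
  let ?w = "\<lambda>p A x. ennreal (p x) * indicator A x"
  define F where "F x = ennreal (r / 2) * (?w p\<^sub>0 S x + ?w p\<^sub>1 ?S' x)
                        + ennreal (1 / (2 * r)) * (?w p\<^sub>1 S x + ?w p\<^sub>0 ?S' x)" for x
  text \<open>Weighted AM-GM, with the large weight on the error events of the test \<open>S\<close>.\<close>
  note affinity
  also have "(\<integral>\<^sup>+ x. ennreal (sqrt (p\<^sub>0 x * p\<^sub>1 x)) \<partial>N) \<le> (\<integral>\<^sup>+ x. F x \<partial>N)"
  proof (intro nn_integral_mono)
    fix x assume "x \<in> space N"
    then show "ennreal (sqrt (p\<^sub>0 x * p\<^sub>1 x)) \<le> F x"
      using sqrt_mult_le_weighted[OF nonneg(1,2) r] sqrt_mult_le_weighted[OF nonneg(2,1) r] r nonneg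
      by (cases "x \<in> S")
         (simp_all add: F_def mult.commute ennreal_mult[symmetric] ennreal_plus[symmetric] field_simps
           del: ennreal_plus)
  qed
  also have "(\<integral>\<^sup>+ x. F x \<partial>N) =
      ennreal ((r * (measure ?Q\<^sub>0 S + measure ?Q\<^sub>1 ?S') + (measure ?Q\<^sub>1 S + measure ?Q\<^sub>0 ?S') / r) / 2)"
  proof -
    have "(\<integral>\<^sup>+ x. F x \<partial>N) = ennreal (r / 2) * (emeasure ?Q\<^sub>0 S + emeasure ?Q\<^sub>1 ?S')
                               + ennreal (1 / (2 * r)) * (emeasure ?Q\<^sub>1 S + emeasure ?Q\<^sub>0 ?S')"
      using meas S S' by (simp add: F_def nn_integral_add nn_integral_cmult emeasure_density)
    then show ?thesis
      using r by (simp add: Q\<^sub>0.emeasure_eq_measure Q\<^sub>1.emeasure_eq_measure ennreal_mult[symmetric]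
          ennreal_plus[symmetric] field_simps del: ennreal_plus)
  qed
  finally have "\<rho> \<le> (r * (measure ?Q\<^sub>0 S + measure ?Q\<^sub>1 ?S') + (measure ?Q\<^sub>1 S + measure ?Q\<^sub>0 ?S') / r) / 2"
    using r by (subst (asm) ennreal_le_iff) (auto intro!: add_nonneg_nonneg)
  also have "\<dots> = (measure ?Q\<^sub>0 S + measure ?Q\<^sub>1 ?S') / \<rho> + \<rho> / 4 * (measure ?Q\<^sub>1 S + measure ?Q\<^sub>0 ?S')"
    using \<rho> by (simp add: r_def field_simps)
  also have "\<dots> \<le> (measure ?Q\<^sub>0 S + measure ?Q\<^sub>1 ?S') / \<rho> + \<rho> / 4 * 2"
    using \<rho> Q\<^sub>0.prob_le_1 Q\<^sub>1.prob_le_1 by (intro add_left_mono mult_left_mono) (smt (verit), simp)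
  finally have "\<rho> / 2 \<le> (measure ?Q\<^sub>0 S + measure ?Q\<^sub>1 ?S') / \<rho>" by linarith
  then show ?thesis
    using \<rho> by (simp add: field_simps power2_eq_square)
qed

section \<open>Approximation by events of a generating algebra\<close>

lemma measure_sym_diff_Union_le:
  fixes A Z :: "nat \<Rightarrow> 'a set"
  assumes "finite_measure M" and A: "range A \<subseteq> sets M" and Z: "\<And>i. Z i \<in> sets M"
  shows "measure M (sym_diff (\<Union>i. A i) (\<Union>i<N. Z i))
     \<le> measure M ((\<Union>i. A i) - (\<Union>i<N. A i)) + (\<Sum>i<N. measure M (sym_diff (A i) (Z i)))"
proof -
  interpret finite_measure M by fact
  have "measure M (sym_diff (\<Union>i. A i) (\<Union>i<N. Z i))
      \<le> measure M (((\<Union>i. A i) - (\<Union>i<N. A i)) \<union> (\<Union>i<N. sym_diff (A i) (Z i)))"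
    using A Z by (intro finite_measure_mono) (fastforce, auto)
  also have "\<dots> \<le> measure M ((\<Union>i. A i) - (\<Union>i<N. A i)) + measure M (\<Union>i<N. sym_diff (A i) (Z i))"
    using A Z by (intro measure_Un_le) auto
  also have "measure M (\<Union>i<N. sym_diff (A i) (Z i)) \<le> (\<Sum>i<N. measure M (sym_diff (A i) (Z i)))"
    using A Z by (intro finite_measure_subadditive_finite) auto
  finally show ?thesis by simp
qed

lemma eventually_measure_Union_diff_less:
  fixes A :: "nat \<Rightarrow> 'a set"
  assumes "finite_measure M" and A: "range A \<subseteq> sets M" and e: "e > 0"
  shows "eventually (\<lambda>N. measure M ((\<Union>i. A i) - (\<Union>i<N. A i)) < e) sequentially"
proof -
  interpret finite_measure M by fact
  have "(\<lambda>N. measure M (\<Union>i<N. A i)) \<longlonglongrightarrow> measure M (\<Union>N. \<Union>i<N. A i)"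
    using A by (intro finite_Lim_measure_incseq) (auto simp: incseq_def intro: less_le_trans)
  moreover have "(\<Union>N. \<Union>i<N. A i) = (\<Union>i. A i)" by blast
  ultimately have "eventually (\<lambda>N. dist (measure M (\<Union>i<N. A i)) (measure M (\<Union>i. A i)) < e) sequentially"
    using e by (simp add: tendstoD)
  then show ?thesis
  proof (rule eventually_mono)
    fix N assume "dist (measure M (\<Union>i<N. A i)) (measure M (\<Union>i. A i)) < e"
    moreover have "measure M ((\<Union>i. A i) - (\<Union>i<N. A i)) = measure M (\<Union>i. A i) - measure M (\<Union>i<N. A i)"
      using A by (intro finite_measure_Diff) auto
    ultimately show "measure M ((\<Union>i. A i) - (\<Union>i<N. A i)) < e"
      by (simp add: dist_real_def)
  qed
qed

lemma sigma_sets_approx_by_algebra: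
  assumes alg: "algebra \<Omega> G" and Ms: "finite Ms"
    and fin: "\<And>M. M \<in> Ms \<Longrightarrow> finite_measure M" and sets: "\<And>M. M \<in> Ms \<Longrightarrow> sets M = sigma_sets \<Omega> G"
    and A: "A \<in> sigma_sets \<Omega> G" and e: "e > 0"
  shows "\<exists>Z\<in>G. \<forall>M\<in>Ms. measure M (sym_diff A Z) < e"
proof -
  interpret algebra \<Omega> G by (rule alg)
  show ?thesis
    using A e
  proof (induction arbitrary: e)
    case (Basic A)
    then show ?case by force
  next
    case Empty
    then show ?case by force
  next
    case (Compl A)
    then obtain Z where Z: "Z \<in> G" "\<forall>M\<in>Ms. measure M (sym_diff A Z) < e" by blast
    have "sym_diff (\<Omega> - A) (\<Omega> - Z) = sym_diff A Z"
      using Z(1) space_closed sigma_sets_into_sp[OF _ Compl.hyps] by blast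
    then show ?case
      using Z by (intro bexI[of _ "\<Omega> - Z"]) (auto simp: compl_sets)
  next
    case (Union A)
    have A: "range A \<subseteq> sets M" if "M \<in> Ms" for M using Union.hyps sets[OF that] by auto
    have "eventually (\<lambda>N. \<forall>M\<in>Ms. measure M ((\<Union>i. A i) - (\<Union>i<N. A i)) < e / 2) sequentially"
      using Ms fin A Union.prems
      by (intro eventually_ball_finite ballI eventually_measure_Union_diff_less) auto
    then obtain N where N: "\<And>M. M \<in> Ms \<Longrightarrow> measure M ((\<Union>i. A i) - (\<Union>i<N. A i)) < e / 2"
      by (auto simp: eventually_sequentially)
    define e' where "e' = e / (2 * (real N + 1))"
    have "e' > 0" using Union.prems by (simp add: e'_def)
    then obtain Z where Z: "\<And>i. Z i \<in> G" "\<And>i M. M \<in> Ms \<Longrightarrow> measure M (sym_diff (A i) (Z i)) < e'"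
      using Union.IH by metis
    have "(\<Union>i<N. Z i) \<in> G" using Z(1) by (simp add: finite_UN)
    moreover have "measure M (sym_diff (\<Union>i. A i) (\<Union>i<N. Z i)) < e" if M: "M \<in> Ms" for M
    proof -
      have "(\<Sum>i<N. measure M (sym_diff (A i) (Z i))) \<le> real N * e'"
        using sum_mono[of "{..<N}" _ "\<lambda>_. e'"] Z(2)[OF M] by (simp add: less_imp_le)
      also have "\<dots> \<le> e / 2" using Union.prems by (simp add: e'_def field_simps)
      finally show ?thesis
        using measure_sym_diff_Union_le[OF fin[OF M] A[OF M], of Z N] Z(1) sets[OF M] N[OF M] by auto
    qed
    ultimately show ?case by blast
  qed
qed

lemma projective_family_distr_restrict:
  assumes P: "prob_space P" and sets_P: "sets P = sets (PiM I M)"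
  shows "projective_family I (\<lambda>J. distr P (PiM J M) (\<lambda>f. restrict f J)) M"
proof -
  have restrict_meas: "(\<lambda>f. restrict f J) \<in> P \<rightarrow>\<^sub>M PiM J M" if "J \<subseteq> I" for J
    using measurable_restrict_subset[OF that] by (simp add: measurable_cong_sets[OF sets_P refl])
  show ?thesis
    unfolding projective_family_def
  proof (intro conjI allI impI)
    fix J H assume "J \<subseteq> H" "finite H" "H \<subseteq> I"
    then show "distr P (PiM J M) (\<lambda>f. restrict f J) =
               distr (distr P (PiM H M) (\<lambda>f. restrict f H)) (PiM J M) (\<lambda>f. restrict f J)"
      using restrict_meas[of H] measurable_restrict_subset[of J H M]
      by (simp add: distr_distr comp_def restrict_restrict Int_absorb1 cong: distr_cong)
  next
    fix J assume "finite J" "J \<subseteq> I"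
    then show "prob_space (distr P (PiM J M) (\<lambda>f. restrict f J))"
      using restrict_meas P by (intro prob_space.prob_space_distr) auto
  qed
qed

lemma measure_le_add_measure_sym_diff:
  assumes "finite_measure M" "A \<in> sets M" "Z \<in> sets M"
  shows "measure M Z \<le> measure M A + measure M (sym_diff A Z)"
proof -
  interpret finite_measure M by fact
  have "measure M Z \<le> measure M (A \<union> sym_diff A Z)"
    using assms by (intro finite_measure_mono) auto
  also have "\<dots> \<le> measure M A + measure M (sym_diff A Z)"
    using assms by (intro measure_Un_le) auto
  finally show ?thesis .
qed

section \<open>Finite-dimensional laws of the data\<close>

definition is_grid :: "nat \<Rightarrow> (nat \<Rightarrow> real) \<Rightarrow> bool" where
  "is_grid k t \<longleftrightarrow> t 0 = 0 \<and> (\<forall>i<k. t i < t (Suc i)) \<and> t k \<le> 1"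

definition increment_density :: "nat \<Rightarrow> (real \<Rightarrow> real) \<Rightarrow> (nat \<Rightarrow> real) \<Rightarrow> nat \<Rightarrow> real \<Rightarrow> real" where
  "increment_density n f t i =
     normal_density (drift f (t (Suc i)) - drift f (t i)) (sqrt ((t (Suc i) - t i) / real n))"

lemma is_grid_mono:
  assumes "is_grid k t" "i \<le> j" "j \<le> k"
  shows "t i \<le> t j"
  using assms(2,3)
proof (induction j)
  case (Suc j)
  then have "t j < t (Suc j)" using assms(1) by (simp add: is_grid_def)
  with Suc show ?case by (cases "i = Suc j") (auto simp: le_Suc_eq)
qed simp

lemma is_grid_range: "is_grid k t \<Longrightarrow> i \<le> k \<Longrightarrow> t i \<in> {0..1}"
  using is_grid_mono[of k t 0 i] is_grid_mono[of k t i k] by (auto simp: is_grid_def)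

lemma is_grid_through_finite_set:
  assumes "finite J" "J \<subseteq> {0..1}"
  obtains k t where "is_grid k t" "k \<ge> 1" "J \<subseteq> t ` {..k}"
proof -
  define T where "T = insert 0 (insert 1 J)"
  define xs where "xs = sorted_list_of_set T"
  define k where "k = length xs - 1"
  have T: "finite T" "T \<subseteq> {0..1}" "{0, 1} \<subseteq> T" using assms by (auto simp: T_def)
  have set_xs: "set xs = T" and sorted: "sorted_wrt (<) xs"
    using T(1) by (simp_all add: xs_def)
  have "2 \<le> card T" using T card_mono[of T "{0 :: real, 1}"] by simp
  then have len: "length xs = Suc k" "k \<ge> 1"
    by (auto simp: k_def xs_def)
  have mem: "xs ! i \<in> {0..1}" if "i \<le> k" for i
    using that len T(2) set_xs nth_mem[of i xs] by auto
  have "xs ! 0 = Min T"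
    using T by (subst xs_def, subst sorted_list_of_set_nonempty) auto
  also have "Min T = 0" using T by (intro Min_eqI) auto
  finally have "is_grid k (\<lambda>i. xs ! i)"
    using sorted mem[of k] len by (auto simp: is_grid_def sorted_wrt_nth_less)
  moreover have "J \<subseteq> (\<lambda>i. xs ! i) ` {..k}"
  proof
    fix s assume "s \<in> J"
    then obtain i where "i < length xs" "xs ! i = s"
      using set_xs in_set_conv_nth[of s xs] by (auto simp: T_def)
    then show "s \<in> (\<lambda>i. xs ! i) ` {..k}" using len by force
  qed
  ultimately show ?thesis using len that by blast
qed

lemma data_law_prob_space: "is_data_law n f P \<Longrightarrow> prob_space P"
  by (simp add: is_data_law_def)

lemma sets_data_law: "is_data_law n f P \<Longrightarrow> sets P = sets data_space"
  by (simp add: is_data_law_def)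

lemma space_data_law: "is_data_law n f P \<Longrightarrow> space P = space data_space"
  using sets_data_law by (rule sets_eq_imp_space_eq)

lemma measurable_data_law_component:
  "is_data_law n f P \<Longrightarrow> s \<in> {0..1} \<Longrightarrow> (\<lambda>\<omega>. \<omega> s) \<in> borel_measurable P"
  using measurable_component_singleton[of s "{0..1}" "\<lambda>_. borel :: real measure"]
  by (simp add: measurable_cong_sets[OF sets_data_law refl] data_space_def)

lemma distr_increments_data_law:
  assumes law: "is_data_law n f P" and grid: "is_grid k t" and k: "k \<ge> 1"
  shows "distr P (PiM {..<k} (\<lambda>_. borel)) (\<lambda>\<omega>. \<lambda>i\<in>{..<k}. \<omega> (t (Suc i)) - \<omega> (t i))
           = PiM {..<k} (\<lambda>i. density lborel (\<lambda>x. ennreal (increment_density n f t i x)))"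
proof -
  let ?X = "\<lambda>i \<omega>. \<omega> (t (Suc i)) - \<omega> (t i)"
  interpret prob_space P using law by (rule data_law_prob_space)
  have indep: "indep_vars (\<lambda>_. borel) ?X {..<k}"
    and marginal: "\<And>i. i < k \<Longrightarrow> distributed P lborel (?X i) (\<lambda>x. ennreal (increment_density n f t i x))"
    using law grid unfolding is_data_law_def is_grid_def increment_density_def by blast+
  have rv: "random_variable borel (?X i)" if "i \<in> {..<k}" for i
    using that law is_grid_range[OF grid]
    by (intro borel_measurable_diff measurable_data_law_component) auto
  have "distr P (PiM {..<k} (\<lambda>_. borel)) (\<lambda>\<omega>. \<lambda>i\<in>{..<k}. ?X i \<omega>) = PiM {..<k} (\<lambda>i. distr P borel (?X i))"
  proof -
    have "{..<k} \<noteq> {}" using k by (simp add: lessThan_empty_iff)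
    from indep_vars_iff_distr_eq_PiM'[where X="?X" and M'="\<lambda>_. borel", OF this rv] indep
    show ?thesis by blast
  qed
  also have "\<dots> = PiM {..<k} (\<lambda>i. density lborel (\<lambda>x. ennreal (increment_density n f t i x)))"
  proof (rule PiM_cong[OF refl])
    fix i assume "i \<in> {..<k}"
    have "distr P borel (?X i) = distr P lborel (?X i)"
      by (rule distr_cong) simp_all
    also have "\<dots> = density lborel (\<lambda>x. ennreal (increment_density n f t i x))"
      using marginal \<open>i \<in> {..<k}\<close> by (simp add: distributed_def)
    finally show "distr P borel (?X i) = density lborel (\<lambda>x. ennreal (increment_density n f t i x))" .
  qed
  finally show ?thesis .
qed

lemma measurable_partial_sums:
  fixes m :: "'a \<Rightarrow> nat"
  assumes "\<And>s. s \<in> J \<Longrightarrow> m s \<le> k"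
  shows "(\<lambda>d. \<lambda>s\<in>J. \<Sum>i < m s. d i) \<in>
           PiM {..<k} (\<lambda>_. borel) \<rightarrow>\<^sub>M
           PiM J (\<lambda>_. borel :: 'b::{second_countable_topology, topological_comm_monoid_add} measure)"
proof (intro measurable_restrict borel_measurable_sum)
  fix s i assume "s \<in> J" "i \<in> {..<m s}"
  then have "i \<in> {..<k}" using assms[of s] by (simp add: less_le_trans)
  then show "(\<lambda>d. d i) \<in> borel_measurable (PiM {..<k} (\<lambda>_. borel))"
    by (rule measurable_component_singleton)
qed

lemma emeasure_cylinder_data_law:
  assumes law: "is_data_law n f P" and grid: "is_grid k t" "k \<ge> 1"
    and J: "J \<subseteq> t ` {..k}" and X: "X \<in> sets (PiM J (\<lambda>_. borel :: real measure))"
  defines "\<Phi> \<equiv> \<lambda>d. \<lambda>s\<in>J. \<Sum>i < inv_into {..k} t s. d i"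
  shows "emeasure P (prod_emb {0..1} (\<lambda>_. borel) J X) =
           emeasure (PiM {..<k} (\<lambda>i. density lborel (\<lambda>x. ennreal (increment_density n f t i x))))
             (\<Phi> -` X \<inter> space (PiM {..<k} (\<lambda>_. borel)))"
proof -
  let ?D = "\<lambda>\<omega>. \<lambda>i\<in>{..<k}. \<omega> (t (Suc i)) - \<omega> (t i)"
  let ?S = "\<Phi> -` X \<inter> space (PiM {..<k} (\<lambda>_. borel :: real measure))"
  have pos: "inv_into {..k} t s \<le> k" "t (inv_into {..k} t s) = s" if "s \<in> J" for s
    using J that by (auto intro: inv_into_into[of s t "{..k}", simplified] f_inv_into_f)
  have J01: "J \<subseteq> {0..1}" using J is_grid_range[OF grid(1)] by auto
  interpret prob_space P using law by (rule data_law_prob_space)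
  have D: "?D \<in> measurable P (PiM {..<k} (\<lambda>_. borel))"
    using law is_grid_range[OF grid(1)]
    by (intro measurable_restrict borel_measurable_diff measurable_data_law_component) auto
  have "\<Phi> \<in> measurable (PiM {..<k} (\<lambda>_. borel)) (PiM J (\<lambda>_. borel))"
    unfolding \<Phi>_def using pos(1) by (rule measurable_partial_sums)
  then have S: "?S \<in> sets (PiM {..<k} (\<lambda>_. borel))" using X by (rule measurable_sets)
  text \<open>Since \<open>\<omega> 0 = 0\<close> almost surely, the path on \<open>J\<close> is the sum of the preceding grid increments.\<close>
  have "AE \<omega> in P. \<omega> \<in> prod_emb {0..1} (\<lambda>_. borel) J X \<longleftrightarrow> \<omega> \<in> ?D -` ?S \<inter> space P"
    using law[unfolded is_data_law_def]
  proof (elim conjE AE_mp, intro AE_I2 impI)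
    fix \<omega> :: "real \<Rightarrow> real" assume \<omega>: "\<omega> \<in> space P" and "\<omega> 0 = 0"
    have "(\<Sum>i < inv_into {..k} t s. ?D \<omega> i) = \<omega> s" if "s \<in> J" for s
    proof -
      have "(\<Sum>i < inv_into {..k} t s. ?D \<omega> i) = (\<Sum>i < inv_into {..k} t s. \<omega> (t (Suc i)) - \<omega> (t i))"
        using pos(1)[OF that] by (intro sum.cong) auto
      also have "\<dots> = \<omega> s"
        using pos(2)[OF that] grid \<open>\<omega> 0 = 0\<close> by (simp add: sum_lessThan_telescope[of "\<lambda>i. \<omega> (t i)"] is_grid_def)
      finally show ?thesis .
    qed
    then have "\<Phi> (?D \<omega>) = restrict \<omega> J" by (auto simp: \<Phi>_def)
    then show "\<omega> \<in> prod_emb {0..1} (\<lambda>_. borel) J X \<longleftrightarrow> \<omega> \<in> ?D -` ?S \<inter> space P"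
      using \<omega> space_data_law[OF law] by (auto simp: prod_emb_def space_PiM data_space_def)
  qed
  then have "emeasure P (prod_emb {0..1} (\<lambda>_. borel) J X) = emeasure P (?D -` ?S \<inter> space P)"
    using J01 X sets_data_law[OF law] measurable_sets[OF D S]
    by (intro emeasure_eq_AE) (auto simp: data_space_def)
  also have "\<dots> = emeasure (distr P (PiM {..<k} (\<lambda>_. borel)) ?D) ?S"
    using D S by (rule emeasure_distr[symmetric])
  finally show ?thesis
    using distr_increments_data_law[OF law grid] by simp
qed

lemma increment_density_prob_space:
  assumes "n \<ge> 1" "is_grid k t" "i < k"
  shows "prob_space (density lborel (\<lambda>x. ennreal (increment_density n f t i x)))"
  using assms unfolding increment_density_def is_grid_def by (intro prob_space_normal_density) auto

lemma measure_cylinder_data_law: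
  assumes law: "is_data_law n f P" and n: "n \<ge> 1" and grid: "is_grid k t" "k \<ge> 1"
    and J: "J \<subseteq> t ` {..k}" and X: "X \<in> sets (PiM J (\<lambda>_. borel :: real measure))"
  defines "\<Phi> \<equiv> \<lambda>d. \<lambda>s\<in>J. \<Sum>i < inv_into {..k} t s. d i"
  shows "measure P (prod_emb {0..1} (\<lambda>_. borel) J X) =
           measure (density (PiM {..<k} (\<lambda>_. lborel)) (\<lambda>x. ennreal (\<Prod>i<k. increment_density n f t i (x i))))
             (\<Phi> -` X \<inter> space (PiM {..<k} (\<lambda>_. borel)))"
  using emeasure_cylinder_data_law[OF law grid J X]
    PiM_density_lborel[of "{..<k}" "increment_density n f t"] increment_density_prob_space[OF n grid(1)]
  by (simp add: measure_def \<Phi>_def increment_density_def)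

section \<open>The drift gap between \<open>x\<close> and \<open>x + \<delta>\<close>\<close>

lemma has_real_derivative_shifted_three_halves_power:
  assumes "x + c > 0"
  shows "((\<lambda>x. 4/3 * ((x + c) * sqrt (x + c))) has_real_derivative 2 * sqrt (x + c)) (at x)"
proof -
  have "((\<lambda>x. 4/3 * ((x + c) * sqrt (x + c))) has_real_derivative
          4/3 * (sqrt (x + c) + (x + c) * (inverse (sqrt (x + c)) / 2))) (at x)"
    using assms by (auto intro!: derivative_eq_intros)
  moreover have "(x + c) * inverse (sqrt (x + c)) = sqrt (x + c)"
    using assms by (metis less_eq_real_def real_div_sqrt divide_inverse)
  then have "4/3 * (sqrt (x + c) + (x + c) * (inverse (sqrt (x + c)) / 2)) = 2 * sqrt (x + c)"
    by (simp add: algebra_simps)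
  ultimately show ?thesis by simp
qed

lemma drift_shift:
  assumes "c \<ge> 0" "t \<ge> 0"
  shows "drift (\<lambda>x. x + c) t = 4/3 * ((t + c) * sqrt (t + c)) - 4/3 * (c * sqrt c)"
proof -
  let ?F = "\<lambda>x. 4/3 * ((x + c) * sqrt (x + c))"
  have "((\<lambda>s. 2 * sqrt (s + c)) has_integral (?F t - ?F 0)) {0..t}"
  proof (rule fundamental_theorem_of_calculus_interior[OF assms(2)])
    show "continuous_on {0..t} ?F" by (intro continuous_intros)
    fix x assume "x \<in> {0<..<t}"
    then have "x + c > 0" using assms by auto
    then show "(?F has_vector_derivative 2 * sqrt (x + c)) (at x)"
      using has_real_derivative_shifted_three_halves_power has_real_derivative_iff_has_vector_derivative
      by blast
  qed
  from integral_unique[OF this] show ?thesis unfolding drift_def by simp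
qed

lemma ln_ge_two_diff_div_sum:
  fixes y :: real assumes y: "y \<ge> 1"
  shows "2 * (y - 1) / (y + 1) \<le> ln y"
proof -
  let ?g = "\<lambda>y. ln y - 2 * (y - 1) / (y + 1)"
  have "?g 1 \<le> ?g y"
  proof (rule DERIV_nonneg_imp_nondecreasing[OF y])
    fix x :: real assume x: "1 \<le> x" "x \<le> y"
    have "(?g has_real_derivative (1/x - 4 / (x + 1)\<^sup>2)) (at x)"
      using x by (auto intro!: derivative_eq_intros simp: power2_eq_square field_simps)
    moreover have "4 * x \<le> (x + 1)\<^sup>2"
      using zero_le_power2[of "x - 1"] by (simp add: power2_eq_square algebra_simps)
    then have "4 / (x + 1)\<^sup>2 \<le> 1 / x"
      using x by (simp add: field_simps)
    ultimately show "\<exists>d. (?g has_real_derivative d) (at x) \<and> 0 \<le> d" by auto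
  qed
  then show ?thesis by simp
qed

lemma drift_gap_increment_bounds:
  fixes \<delta> a b :: real
  assumes \<delta>: "\<delta> > 0" and ab: "0 \<le> a" "a \<le> b"
  defines "g \<equiv> (drift (\<lambda>x. x + \<delta>) b - drift (\<lambda>x. x + \<delta>) a) - (drift (\<lambda>x. x) b - drift (\<lambda>x. x) a)"
  shows "0 \<le> g" "g \<le> 4 * \<delta> * (sqrt (b + \<delta>) - sqrt (a + \<delta>))"
proof -
  define F where "F c x = 4/3 * ((x + c) * sqrt (x + c))" for c x :: real
  define U where "U x = F \<delta> x - F 0 x" for x
  have g: "g = U b - U a"
    unfolding g_def U_def F_def
    using drift_shift[of \<delta> a] drift_shift[of \<delta> b] drift_shift[of 0 a] drift_shift[of 0 b] \<delta> ab by simp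
  have U': "(U has_real_derivative 2 * sqrt (x + \<delta>) - 2 * sqrt (x + 0)) (at x)" if "x > 0" for x
    unfolding U_def F_def using that \<delta>
    by (intro DERIV_diff has_real_derivative_shifted_three_halves_power) auto
  have "U a \<le> U b"
  proof (rule DERIV_nonneg_imp_increasing_open[OF ab(2)])
    fix x assume "a < x" "x < b"
    then have "x > 0" using ab by auto
    then show "\<exists>y. (U has_real_derivative y) (at x) \<and> 0 \<le> y"
      using U' \<delta> by (intro exI[of _ "2 * sqrt (x + \<delta>) - 2 * sqrt (x + 0)"]) auto
  qed (simp add: U_def F_def continuous_intros)
  then show "0 \<le> g" by (simp add: g)
  text \<open>\<open>U' x = 2 (\<surd>(x + \<delta>) - \<surd>x) \<le> 2\<delta> / \<surd>(x + \<delta>)\<close>, the derivative of \<open>4\<delta> \<surd>(x + \<delta>)\<close>.\<close>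
  define V where "V x = 4 * \<delta> * sqrt (x + \<delta>) - U x" for x
  have "V a \<le> V b"
  proof (rule DERIV_nonneg_imp_increasing_open[OF ab(2)])
    fix x assume "a < x" "x < b"
    then have x: "x > 0" using ab by auto
    have "(V has_real_derivative 4 * \<delta> * (inverse (sqrt (x + \<delta>)) / 2) - (2 * sqrt (x + \<delta>) - 2 * sqrt (x + 0))) (at x)"
      unfolding V_def using x \<delta> U'[OF x] by (auto intro!: derivative_eq_intros)
    moreover have "2 * sqrt (x + \<delta>) - 2 * sqrt x \<le> 4 * \<delta> * (inverse (sqrt (x + \<delta>)) / 2)"
    proof -
      have "x = sqrt x * sqrt x" using x by simp
      also have "\<dots> \<le> sqrt x * sqrt (x + \<delta>)" using x \<delta> by (intro mult_left_mono) auto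
      finally have "(2 * sqrt (x + \<delta>) - 2 * sqrt x) * sqrt (x + \<delta>) \<le> 2 * \<delta>"
        using x \<delta> by (simp add: algebra_simps)
      then show ?thesis using x \<delta> by (simp add: field_simps)
    qed
    ultimately show "\<exists>y. (V has_real_derivative y) (at x) \<and> 0 \<le> y" by auto
  qed (simp add: V_def U_def F_def continuous_intros)
  then show "g \<le> 4 * \<delta> * (sqrt (b + \<delta>) - sqrt (a + \<delta>))"
    by (simp add: g V_def algebra_simps)
qed

lemma sqrt_diff_div_sqrt_add_le_ln_diff:
  fixes A B :: real
  assumes "0 < A" "A \<le> B"
  shows "(sqrt B - sqrt A) / (sqrt B + sqrt A) \<le> (ln B - ln A) / 4"
proof -
  define y where "y = sqrt B / sqrt A"
  have "y \<ge> 1" using assms by (simp add: y_def)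
  have "y - 1 = (sqrt B - sqrt A) / sqrt A" "y + 1 = (sqrt B + sqrt A) / sqrt A"
    using assms by (simp_all add: y_def field_simps)
  then have "(sqrt B - sqrt A) / (sqrt B + sqrt A) = (y - 1) / (y + 1)"
    using assms by simp
  also have "\<dots> \<le> ln y / 2"
    using ln_ge_two_diff_div_sum[OF \<open>y \<ge> 1\<close>] by (simp add: mult.commute)
  also have "ln y = (ln B - ln A) / 2"
    using assms by (simp add: y_def ln_div ln_sqrt)
  finally show ?thesis by simp
qed

lemma drift_gap_chi_square_le:
  fixes \<delta> n :: real
  assumes \<delta>: "\<delta> > 0" and n: "n > 0" and grid: "is_grid k t"
  shows "(\<Sum>i<k. ((drift (\<lambda>x. x + \<delta>) (t (Suc i)) - drift (\<lambda>x. x + \<delta>) (t i))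
                 - (drift (\<lambda>x. x) (t (Suc i)) - drift (\<lambda>x. x) (t i)))\<^sup>2 / ((t (Suc i) - t i) / n))
     \<le> 4 * \<delta>\<^sup>2 * n * (ln (1 + \<delta>) - ln \<delta>)"
proof -
  have step: "((drift (\<lambda>x. x + \<delta>) (t (Suc i)) - drift (\<lambda>x. x + \<delta>) (t i))
                 - (drift (\<lambda>x. x) (t (Suc i)) - drift (\<lambda>x. x) (t i)))\<^sup>2 / ((t (Suc i) - t i) / n)
        \<le> 4 * \<delta>\<^sup>2 * n * (ln (t (Suc i) + \<delta>) - ln (t i + \<delta>))" if i: "i < k" for i
  proof -
    let ?a = "t i" and ?b = "t (Suc i)"
    let ?A = "?a + \<delta>" and ?B = "?b + \<delta>"
    let ?g = "(drift (\<lambda>x. x + \<delta>) ?b - drift (\<lambda>x. x + \<delta>) ?a) - (drift (\<lambda>x. x) ?b - drift (\<lambda>x. x) ?a)"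
    have ab: "0 \<le> ?a" "?a < ?b"
      using i grid is_grid_range[OF grid, of i] by (auto simp: is_grid_def)
    have A: "0 < ?A" "?A < ?B" using ab \<delta> by auto
    note g = drift_gap_increment_bounds[OF \<delta> ab(1) less_imp_le[OF ab(2)]]
    have "?g\<^sup>2 / ((?b - ?a) / n) = n * (?g\<^sup>2 / (?B - ?A))"
      using n by (simp add: field_simps)
    also have "\<dots> \<le> n * ((4 * \<delta> * (sqrt ?B - sqrt ?A))\<^sup>2 / ((sqrt ?B - sqrt ?A) * (sqrt ?B + sqrt ?A)))"
      using g n A by (intro mult_left_mono divide_mono power_mono) (auto simp: algebra_simps)
    also have "\<dots> = 16 * \<delta>\<^sup>2 * n * ((sqrt ?B - sqrt ?A) / (sqrt ?B + sqrt ?A))"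
    proof -
      have "sqrt ?B - sqrt ?A > 0" "sqrt ?B + sqrt ?A > 0" using A by (auto intro: add_pos_pos)
      moreover have "n * ((4 * \<delta> * p)\<^sup>2 / (p * q)) = 16 * \<delta>\<^sup>2 * n * (p / q)"
        if "p > 0" "q > 0" for p q :: real
        using that by (simp add: power2_eq_square field_simps)
      ultimately show ?thesis by blast
    qed
    also have "\<dots> \<le> 16 * \<delta>\<^sup>2 * n * ((ln ?B - ln ?A) / 4)"
      using A \<delta> n by (intro mult_left_mono sqrt_diff_div_sqrt_add_le_ln_diff) auto
    also have "\<dots> = 4 * \<delta>\<^sup>2 * n * (ln ?B - ln ?A)" by simp
    finally show ?thesis .
  qed
  have "(\<Sum>i<k. ((drift (\<lambda>x. x + \<delta>) (t (Suc i)) - drift (\<lambda>x. x + \<delta>) (t i))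
                 - (drift (\<lambda>x. x) (t (Suc i)) - drift (\<lambda>x. x) (t i)))\<^sup>2 / ((t (Suc i) - t i) / n))
      \<le> (\<Sum>i<k. 4 * \<delta>\<^sup>2 * n * (ln (t (Suc i) + \<delta>) - ln (t i + \<delta>)))"
    using step by (intro sum_mono) auto
  also have "\<dots> = 4 * \<delta>\<^sup>2 * n * (ln (t k + \<delta>) - ln (t 0 + \<delta>))"
    by (simp add: sum_distrib_left[symmetric] sum_lessThan_telescope[of "\<lambda>i. ln (t i + \<delta>)"])
  also have "\<dots> \<le> 4 * \<delta>\<^sup>2 * n * (ln (1 + \<delta>) - ln \<delta>)"
    using grid is_grid_range[OF grid, of k] \<delta> n by (intro mult_left_mono) (auto simp: is_grid_def)
  finally show ?thesis .
qed

lemma log_rate_bounds: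
  fixes n :: nat assumes n: "n \<ge> 3"
  defines "\<delta> \<equiv> (real n * ln (real n)) powr (-1/2)"
  shows "0 < \<delta>" "\<delta> \<le> 1" "\<delta> \<le> real n powr (-1/2)"
    "4 * \<delta>\<^sup>2 * real n * (ln (1 + \<delta>) - ln \<delta>) \<le> 8"
proof -
  have ln: "ln (real n) \<ge> 1"
    using n exp_le ln_ge_iff[of "real n" 1] by simp
  define m where "m = real n * ln (real n)"
  have m: "3 \<le> m" "m \<le> real n * real n"
    using n ln ln_le_minus_one[of "real n"] mult_mono[of 3 "real n" 1 "ln (real n)"]
    by (auto simp: m_def intro!: mult_left_mono)
  have \<delta>: "\<delta> = 1 / sqrt m"
    using m by (simp add: \<delta>_def m_def powr_minus_divide powr_half_sqrt)
  show "0 < \<delta>" "\<delta> \<le> 1" using m by (simp_all add: \<delta>)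
  show "\<delta> \<le> real n powr (-1/2)"
    unfolding \<delta>_def using n ln by (intro powr_mono2') auto
  have "ln (1 + \<delta>) - ln \<delta> = ln (1 + sqrt m)"
    using m add_pos_nonneg[of 1 "sqrt m"] by (simp add: \<delta> ln_div field_simps)
  also have "\<dots> \<le> ln (real n * real n)"
  proof -
    have "sqrt m \<le> real n" using m real_sqrt_le_mono[OF m(2)] by simp
    moreover have "3 * real n \<le> real n * real n" using n by (intro mult_right_mono) auto
    moreover have "0 < 1 + sqrt m" using m add_pos_nonneg[of 1 "sqrt m"] by simp
    moreover have "real n \<ge> 3" using n by simp
    ultimately show ?thesis by (intro ln_mono) linarith+
  qed
  also have "\<dots> = 2 * ln (real n)" using n by (simp add: ln_mult)
  finally have D: "ln (1 + \<delta>) - ln \<delta> \<le> 2 * ln (real n)" .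
  have "4 * \<delta>\<^sup>2 * real n = 4 / ln (real n)"
    using m n by (simp add: \<delta> m_def power_divide)
  then have "4 * \<delta>\<^sup>2 * real n * (ln (1 + \<delta>) - ln \<delta>) \<le> 4 / ln (real n) * (2 * ln (real n))"
    using D ln by (metis divide_nonneg_nonneg mult_left_mono zero_le_numeral order_trans zero_le_one)
  then show "4 * \<delta>\<^sup>2 * real n * (ln (1 + \<delta>) - ln \<delta>) \<le> 8"
    using ln by simp
qed

lemma affinity_increment_densities_ge:
  assumes n: "n \<ge> 1" and \<delta>: "\<delta> > 0" and chi: "4 * \<delta>\<^sup>2 * real n * (ln (1 + \<delta>) - ln \<delta>) \<le> 8"
    and grid: "is_grid k t"
  shows "ennreal (exp (-1)) \<le> (\<integral>\<^sup>+ x. ennreal (sqrt ((\<Prod>i<k. increment_density n (\<lambda>x. x) t i (x i)) *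
                                (\<Prod>i<k. increment_density n (\<lambda>x. x + \<delta>) t i (x i)))) \<partial>PiM {..<k} (\<lambda>_. lborel))"
proof -
  let ?gap = "\<lambda>i. (drift (\<lambda>x. x + \<delta>) (t (Suc i)) - drift (\<lambda>x. x + \<delta>) (t i))
                   - (drift (\<lambda>x. x) (t (Suc i)) - drift (\<lambda>x. x) (t i))"
  have "(\<Sum>i<k. (drift (\<lambda>x. x) (t (Suc i)) - drift (\<lambda>x. x) (t i)
                   - (drift (\<lambda>x. x + \<delta>) (t (Suc i)) - drift (\<lambda>x. x + \<delta>) (t i)))\<^sup>2
                 / (8 * (sqrt ((t (Suc i) - t i) / real n))\<^sup>2))
        = (\<Sum>i<k. (?gap i)\<^sup>2 / ((t (Suc i) - t i) / real n)) / 8"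
    unfolding sum_divide_distrib using grid
    by (intro sum.cong refl) (auto simp: is_grid_def power2_commute[of "drift (\<lambda>x. x) _ - _"])
  also have "\<dots> \<le> 1"
    using drift_gap_chi_square_le[OF \<delta> _ grid, of "real n"] chi n by linarith
  finally show ?thesis
    unfolding increment_density_def
    by (subst nn_integral_sqrt_prod_normal_density) (use grid n in \<open>auto simp: is_grid_def\<close>)
qed

section \<open>Two-point lower bound\<close>

lemma cylinder_test_error_ge:
  fixes P\<^sub>0 P\<^sub>1 :: "(real \<Rightarrow> real) measure"
  assumes n: "n \<ge> 1" and \<delta>: "\<delta> > 0" and chi: "4 * \<delta>\<^sup>2 * real n * (ln (1 + \<delta>) - ln \<delta>) \<le> 8"
    and law\<^sub>0: "is_data_law n (\<lambda>x. x) P\<^sub>0" and law\<^sub>1: "is_data_law n (\<lambda>x. x + \<delta>) P\<^sub>1"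
    and J: "finite J" "J \<subseteq> {0..1}" and X: "X \<in> sets (PiM J (\<lambda>_. borel :: real measure))"
  defines "Z \<equiv> prod_emb {0..1} (\<lambda>_. borel) J X"
  shows "exp (-2) / 2 \<le> measure P\<^sub>0 Z + measure P\<^sub>1 (space P\<^sub>1 - Z)"
proof -
  obtain k t where grid: "is_grid k t" "k \<ge> 1" and Jt: "J \<subseteq> t ` {..k}"
    using is_grid_through_finite_set[OF J] .
  define \<Phi> :: "(nat \<Rightarrow> real) \<Rightarrow> real \<Rightarrow> real" where "\<Phi> = (\<lambda>d. \<lambda>s\<in>J. \<Sum>i < inv_into {..k} t s. d i)"
  define S where "S = \<Phi> -` X \<inter> space (PiM {..<k} (\<lambda>_. borel :: real measure))"
  define N where "N = PiM {..<k} (\<lambda>_. lborel :: real measure)"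
  define p where "p f x = (\<Prod>i<k. increment_density n f t i (x i))" for f x
  have pos: "inv_into {..k} t s \<le> k" if "s \<in> J" for s
    using Jt that by (auto intro: inv_into_into[of s t "{..k}", simplified])
  have "sets N = sets (PiM {..<k} (\<lambda>_. borel))"
    unfolding N_def by (rule sets_PiM_cong) auto
  then have "S \<in> sets N"
    using measurable_sets[OF measurable_partial_sums[where m="inv_into {..k} t", OF pos] X]
    by (simp add: S_def \<Phi>_def)
  have prob: "prob_space (density N (p f))" for f
  proof -
    have "density N (p f) = PiM {..<k} (\<lambda>i. density lborel (\<lambda>x. ennreal (increment_density n f t i x)))"
      using PiM_density_lborel[of "{..<k}" "increment_density n f t"] increment_density_prob_space[OF n grid(1)]
      by (simp add: N_def p_def increment_density_def)
    then show ?thesis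
      using increment_density_prob_space[OF n grid(1)] by (auto intro!: prob_space_PiM)
  qed
  have "ennreal (exp (-1)) \<le> (\<integral>\<^sup>+ x. ennreal (sqrt (p (\<lambda>x. x) x * p (\<lambda>x. x + \<delta>) x)) \<partial>N)"
    unfolding N_def p_def by (rule affinity_increment_densities_ge[OF n \<delta> chi grid(1)])
  then have "(exp (-1))\<^sup>2 / 2 \<le> measure (density N (p (\<lambda>x. x))) S + measure (density N (p (\<lambda>x. x + \<delta>))) (space N - S)"
    using prob \<open>S \<in> sets N\<close> by (intro density_test_error_ge) (auto simp: p_def N_def increment_density_def intro!: prod_nonneg)
  moreover have "measure P\<^sub>0 Z = measure (density N (p (\<lambda>x. x))) S"
    unfolding Z_def N_def p_def S_def \<Phi>_def by (rule measure_cylinder_data_law[OF law\<^sub>0 n grid Jt X])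
  moreover have "measure P\<^sub>1 Z = measure (density N (p (\<lambda>x. x + \<delta>))) S"
    unfolding Z_def N_def p_def S_def \<Phi>_def by (rule measure_cylinder_data_law[OF law\<^sub>1 n grid Jt X])
  moreover have "measure P\<^sub>1 (space P\<^sub>1 - Z) = 1 - measure P\<^sub>1 Z"
    using J X sets_data_law[OF law\<^sub>1]
    by (intro prob_space.prob_compl data_law_prob_space[OF law\<^sub>1]) (simp add: Z_def data_space_def)
  moreover have "measure (density N (p (\<lambda>x. x + \<delta>))) (space N - S) = 1 - measure (density N (p (\<lambda>x. x + \<delta>))) S"
    using prob_space.prob_compl[OF prob] \<open>S \<in> sets N\<close> by simp
  moreover have "(exp (-1::real))\<^sup>2 = exp (-2)"
    by (simp flip: exp_double)
  ultimately show ?thesis by simp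
qed

lemma data_law_test_error_ge:
  fixes P\<^sub>0 P\<^sub>1 :: "(real \<Rightarrow> real) measure"
  assumes n: "n \<ge> 1" and \<delta>: "\<delta> > 0" and chi: "4 * \<delta>\<^sup>2 * real n * (ln (1 + \<delta>) - ln \<delta>) \<le> 8"
    and law\<^sub>0: "is_data_law n (\<lambda>x. x) P\<^sub>0" and law\<^sub>1: "is_data_law n (\<lambda>x. x + \<delta>) P\<^sub>1"
    and A: "A \<in> sets data_space"
  shows "exp (-2) / 2 \<le> measure P\<^sub>0 A + measure P\<^sub>1 (space data_space - A)"
proof (rule field_le_epsilon)
  let ?\<Omega> = "space data_space"
  interpret P\<^sub>0: prob_space P\<^sub>0 using law\<^sub>0 by (rule data_law_prob_space)
  interpret P\<^sub>1: prob_space P\<^sub>1 using law\<^sub>1 by (rule data_law_prob_space)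
  text \<open>Any projective family gives access to the library's algebra of cylinder events.\<close>
  interpret F: projective_family "{0..1}" "\<lambda>J. distr P\<^sub>0 (PiM J (\<lambda>_. borel)) (\<lambda>f. restrict f J)" "\<lambda>_. borel :: real measure"
    using P\<^sub>0.prob_space_axioms sets_data_law[OF law\<^sub>0]
    by (intro projective_family_distr_restrict) (simp_all add: data_space_def)
  note sets = sets_data_law[OF law\<^sub>0] sets_data_law[OF law\<^sub>1]
  fix e :: real assume "e > 0"
  have "\<exists>Z\<in>F.generator. \<forall>M\<in>{P\<^sub>0, P\<^sub>1}. measure M (sym_diff A Z) < e / 2"
    using F.algebra_generator F.sets_PiM_generator sets A \<open>e > 0\<close>
      P\<^sub>0.finite_measure_axioms P\<^sub>1.finite_measure_axioms
    by (intro sigma_sets_approx_by_algebra) (auto simp: data_space_def)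
  then obtain Z where "Z \<in> F.generator" and Z: "measure P\<^sub>0 (sym_diff A Z) < e / 2" "measure P\<^sub>1 (sym_diff A Z) < e / 2"
    by auto
  then obtain J X where J: "finite J" "J \<subseteq> {0..1}" and X: "X \<in> sets (PiM J (\<lambda>_. borel))"
    and Z_eq: "Z = prod_emb {0..1} (\<lambda>_. borel) J X"
    by (auto elim: F.generator.cases)
  have Z_sets: "Z \<in> sets data_space" using J X by (simp add: Z_eq data_space_def)
  have "exp (-2) / 2 \<le> measure P\<^sub>0 Z + measure P\<^sub>1 (?\<Omega> - Z)"
    using cylinder_test_error_ge[OF n \<delta> chi law\<^sub>0 law\<^sub>1 J X] space_data_law[OF law\<^sub>1] by (simp add: Z_eq)
  moreover have "measure P\<^sub>0 Z \<le> measure P\<^sub>0 A + measure P\<^sub>0 (sym_diff A Z)"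
    using A Z_sets sets by (intro measure_le_add_measure_sym_diff P\<^sub>0.finite_measure_axioms) auto
  moreover have "measure P\<^sub>1 (?\<Omega> - Z) \<le> measure P\<^sub>1 (?\<Omega> - A) + measure P\<^sub>1 (sym_diff (?\<Omega> - A) (?\<Omega> - Z))"
    using A Z_sets sets by (intro measure_le_add_measure_sym_diff P\<^sub>1.finite_measure_axioms) auto
  moreover have "measure P\<^sub>1 (sym_diff (?\<Omega> - A) (?\<Omega> - Z)) \<le> measure P\<^sub>1 (sym_diff A Z)"
    using A Z_sets sets by (intro P\<^sub>1.finite_measure_mono) auto
  ultimately show "exp (-2) / 2 \<le> measure P\<^sub>0 A + measure P\<^sub>1 (?\<Omega> - A) + e"
    using Z by linarith
qed

lemma two_point_error_lower_bound:
  fixes fhat :: "'a \<Rightarrow> real"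
  assumes P\<^sub>1: "finite_measure P\<^sub>1" and sets: "sets P\<^sub>1 = sets M"
    and test: "\<And>A. A \<in> sets M \<Longrightarrow> c \<le> measure P\<^sub>0 A + measure P\<^sub>1 (space M - A)"
    and fhat: "fhat \<in> borel_measurable M" and sep: "2 * r \<le> \<bar>\<theta>\<^sub>1 - \<theta>\<^sub>0\<bar>"
  shows "c / 2 \<le> max (measure P\<^sub>0 {\<omega> \<in> space M. \<bar>fhat \<omega> - \<theta>\<^sub>0\<bar> \<ge> r})
                       (measure P\<^sub>1 {\<omega> \<in> space M. \<bar>fhat \<omega> - \<theta>\<^sub>1\<bar> \<ge> r})"
proof -
  let ?A = "{\<omega> \<in> space M. \<bar>fhat \<omega> - \<theta>\<^sub>0\<bar> \<ge> r}" and ?B = "{\<omega> \<in> space M. \<bar>fhat \<omega> - \<theta>\<^sub>1\<bar> \<ge> r}"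
  interpret P\<^sub>1: finite_measure P\<^sub>1 by (rule P\<^sub>1)
  note fhat[measurable]
  have "?A \<in> sets M" "?B \<in> sets M" by measurable
  have "space M - ?A \<subseteq> ?B" using sep by auto
  then have "measure P\<^sub>1 (space M - ?A) \<le> measure P\<^sub>1 ?B"
    using \<open>?B \<in> sets M\<close> sets by (intro P\<^sub>1.finite_measure_mono) auto
  then show ?thesis
    using test[OF \<open>?A \<in> sets M\<close>] by linarith
qed

lemma shift_in_affine_class: "0 \<le> c \<Longrightarrow> c \<le> 1 \<Longrightarrow> (\<lambda>x. x + c) \<in> affine_class"
  unfolding affine_class_def by (intro CollectI exI[of _ 1] exI[of _ c]) auto

lemma worst_case_error_ge:
  fixes P :: "(real \<Rightarrow> real) \<Rightarrow> (real \<Rightarrow> real) measure"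
  assumes laws: "\<And>f. f \<in> affine_class \<Longrightarrow> is_data_law n f (P f)"
    and n: "n \<ge> 3" and fhat: "fhat \<in> borel_measurable data_space"
  shows "ereal (exp (-2) / 4) \<le> (SUP f \<in> {f \<in> affine_class. f 0 \<le> real n powr (-1/2)}.
           ereal (measure (P f) {\<omega> \<in> space (P f).
             \<bar>fhat \<omega> - f 0\<bar> / ((real n * ln (real n)) powr (-1/2)) \<ge> 1/2}))"
    (is "_ \<le> (SUP f \<in> ?G. ereal (?err f))")
proof -
  define \<delta> where "\<delta> = (real n * ln (real n)) powr (-1/2)"
  note \<delta> = log_rate_bounds[OF n, folded \<delta>_def]
  have G: "(\<lambda>x. x) \<in> ?G" "(\<lambda>x. x + \<delta>) \<in> ?G"
    using shift_in_affine_class[of 0] shift_in_affine_class[of \<delta>] \<delta> by auto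
  then have law: "is_data_law n (\<lambda>x. x) (P (\<lambda>x. x))" "is_data_law n (\<lambda>x. x + \<delta>) (P (\<lambda>x. x + \<delta>))"
    using laws by auto
  have err: "?err f = measure (P f) {\<omega> \<in> space data_space. \<bar>fhat \<omega> - f 0\<bar> \<ge> \<delta> / 2}" if "f \<in> ?G" for f
    using space_data_law[OF laws] that \<delta>(1) unfolding \<delta>_def[symmetric] by (simp add: field_simps)
  have "exp (-2) / 2 / 2 \<le> max (?err (\<lambda>x. x)) (?err (\<lambda>x. x + \<delta>))"
    unfolding err[OF G(1)] err[OF G(2)]
    using data_law_test_error_ge[of n \<delta> "P (\<lambda>x. x)" "P (\<lambda>x. x + \<delta>)"] \<delta> n law
    by (intro two_point_error_lower_bound[where M = data_space] fhat
        prob_space.finite_measure data_law_prob_space sets_data_law) auto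
  then have "ereal (exp (-2) / 4) \<le> max (ereal (?err (\<lambda>x. x))) (ereal (?err (\<lambda>x. x + \<delta>)))"
    by (simp only: ereal_max[symmetric] ereal_less_eq)
  also have "\<dots> \<le> (SUP f \<in> ?G. ereal (?err f))"
    by (intro max.boundedI SUP_upper G)
  finally show ?thesis .
qed

theorem theorem3p3:
  fixes P :: "nat \<Rightarrow> (real \<Rightarrow> real) \<Rightarrow> (real \<Rightarrow> real) measure"
  assumes "\<And>n f. n \<ge> 1 \<Longrightarrow> f \<in> affine_class \<Longrightarrow> is_data_law n f (P n f)"
  shows "\<exists>C>0. liminf (\<lambda>n.
            INF fhat \<in> borel_measurable data_space.
              SUP f \<in> {f \<in> affine_class. f 0 \<le> (real n) powr (-1/2)}.
                ereal (measure (P n f)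
                  {\<omega> \<in> space (P n f).
                     \<bar>fhat \<omega> - f 0\<bar> / ((real n * ln (real n)) powr (-1/2)) \<ge> C}))
          > 0"
proof (intro exI[of _ "1/2"] conjI)
  let ?risk = "\<lambda>C n. INF fhat \<in> borel_measurable data_space.
                 SUP f \<in> {f \<in> affine_class. f 0 \<le> (real n) powr (-1/2)}.
                   ereal (measure (P n f)
                     {\<omega> \<in> space (P n f).
                        \<bar>fhat \<omega> - f 0\<bar> / ((real n * ln (real n)) powr (-1/2)) \<ge> C})"
  have "ereal (exp (-2) / 4) \<le> liminf (?risk (1/2))"
    using worst_case_error_ge[OF assms]
    by (intro Liminf_bounded) (auto simp: eventually_sequentially intro!: exI[of _ 3] INF_greatest)
  then show "liminf (?risk (1/2)) > 0"
    by (rule less_le_trans[rotated]) simp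
qed simp

end
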